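(* Let $U$, $x_i$, $x_{i+1/2}$, $h$, $\tilde h_R,\tilde h_L$ be as in the context, let $W_i:=\min_{j=1,\dots,k}(\tilde h_R(x_i;x_{j+1})+\tilde h_L(x_i;x_j))$ and $W(x)=\min_{j=1,\dots,k}\{W_j+h(x;x_j)\}$. Then for all $x\in\mathbb{S}^1$, $$W(x)=\min_{i=1,\dots,k}\min\{W_i+h(x;x_i),\ W(x_{i+1/2})+h(x;x_{i+1/2})\}.$$
   Context: $\mathbb{S}^1=\mathbb{R}/\mathbb{Z}$; $U:\mathbb{R}\to\mathbb{R}$ smooth, skew periodic ($U(x)=\tilde U(x)-\bar bx$, $\tilde U$ smooth 1-periodic), whose critical points in one period are exactly $k\ge1$ local minima $x_1,\dots,x_k$ interleaved with $k$ local maxima, $0=x_{1/2}<x_1<x_{3/2}<\dots<x_k<x_{k+1/2}=1$, $x_{i+\ell k}=x_i+\ell$. $L(s,x)=\frac14(s+U'(x))^2$. Peierls barrier from any $z\in\mathbb{S}^1$: $h(y;z)=\liminf_{T\to\infty}\inf\{\int_0^TL(\dot\gamma,\gamma)dt:\gamma:[0,T]\to\mathbb{S}^1$ absolutely continuous, $\gamma(0)=z,\gamma(T)=y\}$. Right barrier: for $y\in[x_i,x_{i+k}]$, $h_R(y;x_i)=\inf\{\int_0^TL(\dot\gamma,\gamma)dt:T\ge0,\gamma:[0,T]\to\mathbb{R}$ absolutely continuous, $\gamma(0)=x_i,\gamma(T)=y\}$; left barrier $h_L(y;x_i)$, $y\in[x_{i-k},x_i]$, same formula. For $i,j\in\{1,\dots,k\}$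 ($x_{k+1}=x_1+1$): $\tilde h_R(x_i;x_{j+1})=h_R(x_i;x_{j+1})$ if $j<i$, $=h_R(x_{i+k};x_{j+1})$ if $j\ge i$; $\tilde h_L(x_i;x_j)=h_L(x_i;x_j)$ if $j\ge i$, $=h_L(x_{i-k};x_j)$ if $j<i$. *)

theory Defs
  imports "HOL-Analysis.Analysis"
begin

definition smooth_fun :: "(real \<Rightarrow> real) \<Rightarrow> bool" where
  "smooth_fun f \<longleftrightarrow> (\<forall>n x. ((deriv ^^ n) f) differentiable (at x))"

definition abs_cont_on :: "real \<Rightarrow> real \<Rightarrow> (real \<Rightarrow> real) \<Rightarrow> bool" where
  "abs_cont_on a b f \<longleftrightarrow>
     (\<forall>\<epsilon>>0. \<exists>\<delta>>0. \<forall>(n::nat) (u::nat \<Rightarrow> real) v.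
        (\<forall>i<n. a \<le> u i \<and> u i \<le> v i \<and> v i \<le> b) \<and>
        (\<forall>i<n. \<forall>j<n. i \<noteq> j \<longrightarrow> v i \<le> u j \<or> v j \<le> u i) \<and>
        (\<Sum>i<n. v i - u i) < \<delta>
        \<longrightarrow> (\<Sum>i<n. \<bar>f (v i) - f (u i)\<bar>) < \<epsilon>)"

definition lagr :: "(real \<Rightarrow> real) \<Rightarrow> real \<Rightarrow> real \<Rightarrow> real" where
  "lagr U s x = (s + deriv U x)\<^sup>2 / 4"

text \<open>Action of a (lifted) curve gamma on [0,T]; the integrand is nonnegative, so we use the
  nonnegative Lebesgue integral (values in ennreal).  The derivative of an absolutely continuous
  curve exists almost everywhere; elsewhere the value of vector_derivative is irrelevant.\<close>
definition action :: "(real \<Rightarrow> real) \<Rightarrow> real \<Rightarrow> (real \<Rightarrow> real) \<Rightarrow> ennreal" where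
  "action U T \<gamma> = (\<integral>\<^sup>+ t \<in> {0..T}. ennreal (lagr U (vector_derivative \<gamma> (at t)) (\<gamma> t)) \<partial>lborel)"

text \<open>Peierls barrier h(y;z) on the circle R/Z, computed with lifts to R: a curve on S^1 from
  z to y corresponds to a lifted curve in R from z ending in y + Z.\<close>
definition peierls :: "(real \<Rightarrow> real) \<Rightarrow> real \<Rightarrow> real \<Rightarrow> ennreal" where
  "peierls U y z = Liminf at_top (\<lambda>T::real.
      INF \<gamma> \<in> {\<gamma>. abs_cont_on 0 T \<gamma> \<and> \<gamma> 0 = z \<and> \<gamma> T - y \<in> \<int>}. action U T \<gamma>)"

text \<open>Both the right barrier h_R and the left barrier h_L are given by this same formula
  (they differ only in the range of y where they are used).\<close>
definition line_barrier :: "(real \<Rightarrow> real) \<Rightarrow> real \<Rightarrow> real \<Rightarrow> ennreal" where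
  "line_barrier U y z = (INF (T, \<gamma>) \<in> {(T, \<gamma>). T \<ge> 0 \<and> abs_cont_on 0 T \<gamma> \<and> \<gamma> 0 = z \<and> \<gamma> T = y}.
      action U T \<gamma>)"

definition hR :: "(real \<Rightarrow> real) \<Rightarrow> real \<Rightarrow> real \<Rightarrow> ennreal" where
  "hR U y z = line_barrier U y z"

definition hL :: "(real \<Rightarrow> real) \<Rightarrow> real \<Rightarrow> real \<Rightarrow> ennreal" where
  "hL U y z = line_barrier U y z"

text \<open>xm i = x_i (minima), extended to all integers by x_{i+lk} = x_i + l.\<close>
definition tilde_hR :: "(real \<Rightarrow> real) \<Rightarrow> (int \<Rightarrow> real) \<Rightarrow> nat \<Rightarrow> int \<Rightarrow> int \<Rightarrow> ennreal" where
  "tilde_hR U xm k i j =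
     (if j < i then hR U (xm i) (xm (j + 1)) else hR U (xm (i + int k)) (xm (j + 1)))"

definition tilde_hL :: "(real \<Rightarrow> real) \<Rightarrow> (int \<Rightarrow> real) \<Rightarrow> nat \<Rightarrow> int \<Rightarrow> int \<Rightarrow> ennreal" where
  "tilde_hL U xm k i j =
     (if j \<ge> i then hL U (xm i) (xm j) else hL U (xm (i - int k)) (xm j))"

definition Wmin :: "(real \<Rightarrow> real) \<Rightarrow> (int \<Rightarrow> real) \<Rightarrow> nat \<Rightarrow> int \<Rightarrow> ennreal" where
  "Wmin U xm k i = Min ((\<lambda>j. tilde_hR U xm k i j + tilde_hL U xm k i j) ` {1..int k})"

definition Wfun :: "(real \<Rightarrow> real) \<Rightarrow> (int \<Rightarrow> real) \<Rightarrow> nat \<Rightarrow> real \<Rightarrow> ennreal" where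
  "Wfun U xm k x = Min ((\<lambda>j. Wmin U xm k j + peierls U x (xm j)) ` {1..int k})"

definition is_local_min :: "(real \<Rightarrow> real) \<Rightarrow> real \<Rightarrow> bool" where
  "is_local_min f x \<longleftrightarrow> (\<exists>e>0. \<forall>y. \<bar>y - x\<bar> < e \<longrightarrow> f x \<le> f y)"

definition is_local_max :: "(real \<Rightarrow> real) \<Rightarrow> real \<Rightarrow> bool" where
  "is_local_max f x \<longleftrightarrow> (\<exists>e>0. \<forall>y. \<bar>y - x\<bar> < e \<longrightarrow> f y \<le> f x)"

end

theory Submission
  imports Defs "HOL-Library.Periodic_Fun"
begin

text \<open>Because \<open>U'\<close> is 1-periodic, a curve from \<open>z\<close> to a lift of \<open>y\<close>, followed by the integer
  translate of a curve from \<open>y\<close> to \<open>x\<close> that makes the endpoints meet, is a curve from \<open>z\<close> to a lift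
  of \<open>x\<close> whose action is the sum of the two actions.  So the finite-time barriers are subadditive in
  time, and taking the liminf gives the triangle inequality \<open>h(x;z) \<le> h(y;z) + h(x;y)\<close> for the
  Peierls barrier.  For \<open>y = x\<^bsub>i+1/2\<^esub>\<close> it yields \<open>W(x) \<le> W(y) + h(x;y)\<close>, so the extra terms in
  the minimum never fall below \<open>W(x)\<close>.\<close>

lemma INF_add_INF_ge:
  fixes f g :: "'a \<Rightarrow> ennreal"
  assumes "\<And>a b. a \<in> A \<Longrightarrow> b \<in> B \<Longrightarrow> c \<le> f a + g b"
  shows "c \<le> (INF a\<in>A. f a) + (INF b\<in>B. g b)"
proof (cases "A = {} \<or> B = {}")
  case True then show ?thesis by auto
next
  case False
  have "(INF a\<in>A. f a) + y = (INF a\<in>A. f a + y)" for y :: ennreal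
    using continuous_at_Inf_mono[of "\<lambda>x. x + y" "f ` A"] False
    using continuous_add[of "at_right (Inf (f ` A))", of "\<lambda>x. x" "\<lambda>x. y"]
    by (auto simp: mono_def image_comp)
  moreover have "x + (INF b\<in>B. g b) = (INF b\<in>B. x + g b)" for x :: ennreal
    using continuous_at_Inf_mono[of "\<lambda>y. x + y" "g ` B"] False
    using continuous_add[of "at_right (Inf (g ` B))", of "\<lambda>y. x" "\<lambda>y. y"]
    by (auto simp: mono_def image_comp)
  ultimately show ?thesis using assms by (auto intro!: INF_greatest)
qed

lemma Liminf_at_top_le_add:
  fixes f g h :: "real \<Rightarrow> ennreal"
  assumes fgh: "\<And>s t. 0 \<le> s \<Longrightarrow> 0 \<le> t \<Longrightarrow> f (s + t) \<le> g s + h t"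
  shows "Liminf at_top f \<le> Liminf at_top g + Liminf at_top h"
  unfolding Liminf_def[of at_top f]
proof (rule SUP_least)
  have Liminf_ge: "(INF s\<in>{s. c \<le> s}. u s) \<le> Liminf at_top u" for c and u :: "real \<Rightarrow> ennreal"
    unfolding Liminf_def by (rule SUP_upper2[of "\<lambda>s. c \<le> s"]) auto
  fix P :: "real \<Rightarrow> bool" assume "P \<in> {P. eventually P at_top}"
  then obtain N where N: "\<And>x. x \<ge> N \<Longrightarrow> P x" by (auto simp: eventually_at_top_linorder)
  have "(INF x\<in>{x. P x}. f x) \<le> (INF s\<in>{s. max N 0 \<le> s}. g s) + (INF t\<in>{t. 0 \<le> t}. h t)"
  proof (rule INF_add_INF_ge)
    fix s t :: real assume "s \<in> {s. max N 0 \<le> s}" "t \<in> {t. 0 \<le> t}"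
    then have "P (s + t)" "0 \<le> s" "0 \<le> t" using N by auto
    then show "(INF x\<in>{x. P x}. f x) \<le> g s + h t"
      by (metis INF_lower fgh mem_Collect_eq order_trans)
  qed
  also have "\<dots> \<le> Liminf at_top g + Liminf at_top h"
    by (intro add_mono Liminf_ge)
  finally show "(INF x\<in>{x. P x}. f x) \<le> Liminf at_top g + Liminf at_top h" .
qed

lemma Min_image_min_eq:
  fixes F H :: "'a \<Rightarrow> 'b::linorder"
  assumes "finite S" "S \<noteq> {}" "\<And>i. i \<in> S \<Longrightarrow> Min (F ` S) \<le> H i"
  shows "Min ((\<lambda>i. min (F i) (H i)) ` S) = Min (F ` S)"
proof (rule antisym)
  have "Min (F ` S) \<in> F ` S"
    using assms(1,2) by (intro Min_in) auto
  then obtain j where "j \<in> S" and j: "Min (F ` S) = F j"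
    by blast
  have "Min ((\<lambda>i. min (F i) (H i)) ` S) \<le> min (F j) (H j)"
    using \<open>j \<in> S\<close> assms(1) by (intro Min_le) auto
  then show "Min ((\<lambda>i. min (F i) (H i)) ` S) \<le> Min (F ` S)"
    unfolding j by simp
  show "Min (F ` S) \<le> Min ((\<lambda>i. min (F i) (H i)) ` S)"
  proof (rule Min.boundedI)
    fix a assume "a \<in> (\<lambda>i. min (F i) (H i)) ` S"
    then obtain i where "i \<in> S" and a: "a = min (F i) (H i)" by blast
    then show "Min (F ` S) \<le> a"
      using assms(1,3) by (simp add: a)
  qed (use assms in auto)
qed

definition nonoverlapping_subintervals ::
    "real \<Rightarrow> real \<Rightarrow> nat \<Rightarrow> (nat \<Rightarrow> real) \<Rightarrow> (nat \<Rightarrow> real) \<Rightarrow> bool" where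
  "nonoverlapping_subintervals a b n u v \<longleftrightarrow>
     (\<forall>i<n. a \<le> u i \<and> u i \<le> v i \<and> v i \<le> b) \<and>
     (\<forall>i<n. \<forall>j<n. i \<noteq> j \<longrightarrow> v i \<le> u j \<or> v j \<le> u i)"

lemma abs_cont_on_iff:
  "abs_cont_on a b f \<longleftrightarrow>
     (\<forall>\<epsilon>>0. \<exists>\<delta>>0. \<forall>n u v. nonoverlapping_subintervals a b n u v \<longrightarrow> (\<Sum>i<n. v i - u i) < \<delta> \<longrightarrow>
        (\<Sum>i<n. \<bar>f (v i) - f (u i)\<bar>) < \<epsilon>)"
  unfolding abs_cont_on_def nonoverlapping_subintervals_def by (simp add: imp_conjL)

lemma abs_cont_onD:
  assumes "abs_cont_on a b f" "\<epsilon> > 0"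
  obtains \<delta> where "\<delta> > 0"
    "\<And>n u v. nonoverlapping_subintervals a b n u v \<Longrightarrow> (\<Sum>i<n. v i - u i) < \<delta> \<Longrightarrow>
       (\<Sum>i<n. \<bar>f (v i) - f (u i)\<bar>) < \<epsilon>"
proof -
  from assms obtain \<delta> where "\<delta> > 0" and "\<forall>n u v. nonoverlapping_subintervals a b n u v \<longrightarrow>
      (\<Sum>i<n. v i - u i) < \<delta> \<longrightarrow> (\<Sum>i<n. \<bar>f (v i) - f (u i)\<bar>) < \<epsilon>"
    unfolding abs_cont_on_iff by blast
  then show thesis using that by blast
qed

lemma abs_cont_on_translate:
  assumes "abs_cont_on a b f" "\<And>t. a + c \<le> t \<Longrightarrow> t \<le> b + c \<Longrightarrow> g t = f (t - c) + d"
  shows "abs_cont_on (a + c) (b + c) g"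
  unfolding abs_cont_on_iff
proof (intro allI impI)
  fix \<epsilon> :: real assume "\<epsilon> > 0"
  then obtain \<delta> where "\<delta> > 0" and \<delta>: "\<And>n u v. nonoverlapping_subintervals a b n u v \<Longrightarrow>
      (\<Sum>i<n. v i - u i) < \<delta> \<Longrightarrow> (\<Sum>i<n. \<bar>f (v i) - f (u i)\<bar>) < \<epsilon>"
    using abs_cont_onD[OF assms(1)] by blast
  show "\<exists>\<delta>>0. \<forall>n u v. nonoverlapping_subintervals (a + c) (b + c) n u v \<longrightarrow> (\<Sum>i<n. v i - u i) < \<delta> \<longrightarrow>
      (\<Sum>i<n. \<bar>g (v i) - g (u i)\<bar>) < \<epsilon>"
  proof (intro exI[of _ \<delta>] conjI allI impI \<open>\<delta> > 0\<close>)
    fix n u v assume uv: "nonoverlapping_subintervals (a + c) (b + c) n u v"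
      and small: "(\<Sum>i<n. v i - u i) < \<delta>"
    have "(\<Sum>i<n. \<bar>g (v i) - g (u i)\<bar>) = (\<Sum>i<n. \<bar>f (v i - c) - f (u i - c)\<bar>)"
      using uv assms(2) by (intro sum.cong) (auto simp: nonoverlapping_subintervals_def)
    also have "\<dots> < \<epsilon>"
      using uv small by (intro \<delta>) (auto simp: nonoverlapping_subintervals_def)
    finally show "(\<Sum>i<n. \<bar>g (v i) - g (u i)\<bar>) < \<epsilon>" .
  qed
qed

lemma nonoverlapping_subintervals_clip:
  assumes "nonoverlapping_subintervals a c n u v" "a \<le> b" "b \<le> c"
  shows "nonoverlapping_subintervals a b n (\<lambda>i. min (u i) b) (\<lambda>i. min (v i) b)"
    and "nonoverlapping_subintervals b c n (\<lambda>i. max (u i) b) (\<lambda>i. max (v i) b)"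
  using assms by (auto simp: nonoverlapping_subintervals_def) (smt (verit))+

lemma abs_cont_on_join:
  assumes "abs_cont_on a b f" "abs_cont_on b c f" "a \<le> b" "b \<le> c"
  shows "abs_cont_on a c f"
  unfolding abs_cont_on_iff
proof (intro allI impI)
  fix \<epsilon> :: real assume "\<epsilon> > 0"
  then have "\<epsilon> / 2 > 0" by simp
  obtain \<delta>1 where "\<delta>1 > 0" and \<delta>1: "\<And>n u v. nonoverlapping_subintervals a b n u v \<Longrightarrow>
      (\<Sum>i<n. v i - u i) < \<delta>1 \<Longrightarrow> (\<Sum>i<n. \<bar>f (v i) - f (u i)\<bar>) < \<epsilon> / 2"
    using abs_cont_onD[OF assms(1) \<open>\<epsilon> / 2 > 0\<close>] by blast
  obtain \<delta>2 where "\<delta>2 > 0" and \<delta>2: "\<And>n u v. nonoverlapping_subintervals b c n u v \<Longrightarrow>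
      (\<Sum>i<n. v i - u i) < \<delta>2 \<Longrightarrow> (\<Sum>i<n. \<bar>f (v i) - f (u i)\<bar>) < \<epsilon> / 2"
    using abs_cont_onD[OF assms(2) \<open>\<epsilon> / 2 > 0\<close>] by blast
  show "\<exists>\<delta>>0. \<forall>n u v. nonoverlapping_subintervals a c n u v \<longrightarrow> (\<Sum>i<n. v i - u i) < \<delta> \<longrightarrow>
      (\<Sum>i<n. \<bar>f (v i) - f (u i)\<bar>) < \<epsilon>"
  proof (intro exI[of _ "min \<delta>1 \<delta>2"] conjI allI impI)
    show "min \<delta>1 \<delta>2 > 0" using \<open>\<delta>1 > 0\<close> \<open>\<delta>2 > 0\<close> by simp
    fix n u v assume uv: "nonoverlapping_subintervals a c n u v"
      and small: "(\<Sum>i<n. v i - u i) < min \<delta>1 \<delta>2"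
    define u1 v1 u2 v2 where "u1 = (\<lambda>i. min (u i) b)" and "v1 = (\<lambda>i. min (v i) b)"
      and "u2 = (\<lambda>i. max (u i) b)" and "v2 = (\<lambda>i. max (v i) b)"
    have ord: "u i \<le> v i" if "i < n" for i
      using uv that by (auto simp: nonoverlapping_subintervals_def)
    have "v1 i - u1 i \<le> v i - u i" "v2 i - u2 i \<le> v i - u i" if "i < n" for i
      using ord[OF that] unfolding u1_def v1_def u2_def v2_def by linarith+
    then have len1: "(\<Sum>i<n. v1 i - u1 i) \<le> (\<Sum>i<n. v i - u i)"
      and len2: "(\<Sum>i<n. v2 i - u2 i) \<le> (\<Sum>i<n. v i - u i)"
      by (auto intro!: sum_mono)
    have sub1: "nonoverlapping_subintervals a b n u1 v1"
      and sub2: "nonoverlapping_subintervals b c n u2 v2"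
      unfolding u1_def v1_def u2_def v2_def by (rule nonoverlapping_subintervals_clip[OF uv assms(3,4)])+
    have "(\<Sum>i<n. \<bar>f (v1 i) - f (u1 i)\<bar>) < \<epsilon> / 2"
      by (rule \<delta>1[OF sub1]) (use len1 small in linarith)
    moreover have "(\<Sum>i<n. \<bar>f (v2 i) - f (u2 i)\<bar>) < \<epsilon> / 2"
      by (rule \<delta>2[OF sub2]) (use len2 small in linarith)
    moreover have "(\<Sum>i<n. \<bar>f (v i) - f (u i)\<bar>)
        \<le> (\<Sum>i<n. \<bar>f (v1 i) - f (u1 i)\<bar> + \<bar>f (v2 i) - f (u2 i)\<bar>)"
      using ord by (intro sum_mono) (auto simp: u1_def v1_def u2_def v2_def min_def max_def)
    ultimately show "(\<Sum>i<n. \<bar>f (v i) - f (u i)\<bar>) < \<epsilon>" by (simp add: sum.distrib)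
  qed
qed

lemma abs_cont_on_glue:
  assumes "abs_cont_on 0 T1 \<gamma>1" "abs_cont_on 0 T2 \<gamma>2" "\<gamma>1 T1 = \<gamma>2 0 + n" "0 \<le> T1" "0 \<le> T2"
  shows "abs_cont_on 0 (T1 + T2) (\<lambda>t. if t \<le> T1 then \<gamma>1 t else \<gamma>2 (t - T1) + n)"
proof (rule abs_cont_on_join)
  have "abs_cont_on (0 + 0) (T1 + 0) (\<lambda>t. if t \<le> T1 then \<gamma>1 t else \<gamma>2 (t - T1) + n)"
    by (rule abs_cont_on_translate[OF assms(1)]) auto
  then show "abs_cont_on 0 T1 (\<lambda>t. if t \<le> T1 then \<gamma>1 t else \<gamma>2 (t - T1) + n)"
    by simp
  have "abs_cont_on (0 + T1) (T2 + T1) (\<lambda>t. if t \<le> T1 then \<gamma>1 t else \<gamma>2 (t - T1) + n)"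
    by (rule abs_cont_on_translate[OF assms(2)]) (use assms(3) in auto)
  then show "abs_cont_on T1 (T1 + T2) (\<lambda>t. if t \<le> T1 then \<gamma>1 t else \<gamma>2 (t - T1) + n)"
    by (simp add: add.commute)
qed (use assms in auto)

lemma vector_derivative_shift:
  fixes g :: "real \<Rightarrow> real"
  shows "vector_derivative (\<lambda>t. g (t - c) + d) (at t) = vector_derivative g (at (t - c))"
proof -
  have "((\<lambda>t. g (t - c) + d) has_vector_derivative D) (at t) \<longleftrightarrow>
      (g has_vector_derivative D) (at (t - c))" for D
  proof -
    have "((\<lambda>t. g (t - c) + d) has_vector_derivative D) (at t) \<longleftrightarrow>
        ((\<lambda>t. g (t + - c)) has_real_derivative D) (at t)"
      by (simp add: has_vector_derivative_add_const has_real_derivative_iff_has_vector_derivative)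
    also have "\<dots> \<longleftrightarrow> (g has_real_derivative D) (at (t + - c))"
      by (rule DERIV_shift[symmetric])
    finally show ?thesis
      by (simp add: has_real_derivative_iff_has_vector_derivative)
  qed
  then show ?thesis unfolding vector_derivative_def by simp
qed

lemma deriv_shift_invariant:
  fixes U :: "real \<Rightarrow> real"
  assumes "\<And>y. U (y + c) = U y + e"
  shows "deriv U (x + c) = deriv U x"
proof -
  have "(U has_real_derivative D) (at (x + c)) \<longleftrightarrow> (U has_real_derivative D) (at x)" for D
  proof -
    have "(U has_real_derivative D) (at (x + c)) \<longleftrightarrow> ((\<lambda>y. U (y + c)) has_real_derivative D) (at x)"
      by (rule DERIV_shift)
    also have "\<dots> \<longleftrightarrow> ((\<lambda>y. U y + e) has_real_derivative D) (at x)"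
      using assms by simp
    finally show ?thesis
      by (simp add: has_real_derivative_iff_has_vector_derivative has_vector_derivative_add_const)
  qed
  then show ?thesis unfolding deriv_def by simp
qed

lemma deriv_skew_periodic:
  fixes U Ut :: "real \<Rightarrow> real"
  assumes "\<And>x. Ut (x + 1) = Ut x" "\<And>x. U x = Ut x - b * x"
  shows "deriv U (x + of_int m) = deriv U x"
proof (rule deriv_shift_invariant[where e = "- b * of_int m"])
  interpret periodic_fun_simple' Ut by standard (rule assms(1))
  show "U (y + of_int m) = U y + - b * of_int m" for y
    using plus_of_int[of y m] by (simp add: assms(2) algebra_simps)
qed

text \<open>The integrand of \<open>action\<close> need not be measurable, so subadditivity of its integral has to
  go through measurable minorants.\<close>

lemma nn_integral_le_by_measurable_minorants:
  assumes "\<And>g. g \<in> borel_measurable M \<Longrightarrow> (\<And>x. g x \<le> f x) \<Longrightarrow> integral\<^sup>N M g \<le> X"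
  shows "integral\<^sup>N M f \<le> X"
  unfolding nn_integral_def[of M f]
proof (rule SUP_least)
  fix g assume "g \<in> {g. simple_function M g \<and> g \<le> f}"
  then have g: "simple_function M g" "g \<le> f" by auto
  have "integral\<^sup>S M g = integral\<^sup>N M g" using nn_integral_eq_simple_integral[OF g(1)] by simp
  also have "\<dots> \<le> X" using assms[of g] g borel_measurable_simple_function[OF g(1)]
    by (auto simp: le_fun_def)
  finally show "integral\<^sup>S M g \<le> X" .
qed

lemma nn_integral_interval_glue_le:
  fixes f f1 f2 :: "real \<Rightarrow> ennreal"
  assumes f1: "\<And>t. 0 < t \<Longrightarrow> t < T1 \<Longrightarrow> f t \<le> f1 t"
    and f2: "\<And>s. 0 < s \<Longrightarrow> s < T2 \<Longrightarrow> f (T1 + s) \<le> f2 s"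
  shows "(\<integral>\<^sup>+ t \<in> {0..T1 + T2}. f t \<partial>lborel)
    \<le> (\<integral>\<^sup>+ t \<in> {0..T1}. f1 t \<partial>lborel) + (\<integral>\<^sup>+ s \<in> {0..T2}. f2 s \<partial>lborel)"
proof (rule nn_integral_le_by_measurable_minorants)
  fix g :: "real \<Rightarrow> ennreal"
  assume g: "g \<in> borel_measurable lborel" and g_le: "\<And>t. g t \<le> f t * indicator {0..T1 + T2} t"
  define I1 I2 where "I1 = {0<..<T1}" and "I2 = {T1<..<T1 + T2}"
  have g_le_f: "g t \<le> f t" for t
    using g_le[of t] by (cases "t \<in> {0..T1 + T2}") auto
  have "AE t in lborel. g t \<le> g t * indicator I1 t + g t * indicator I2 t"
    using AE_lborel_singleton[of 0] AE_lborel_singleton[of T1] AE_lborel_singleton[of "T1 + T2"]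
  proof eventually_elim
    case (elim t)
    show ?case
    proof (cases "t \<in> {0..T1 + T2}")
      case True
      with elim have "t \<in> I1 \<or> t \<in> I2" by (auto simp: I1_def I2_def)
      then show ?thesis by (auto simp: I1_def I2_def)
    next
      case False
      then show ?thesis using g_le[of t] by simp
    qed
  qed
  then have "integral\<^sup>N lborel g \<le> (\<integral>\<^sup>+ t. g t * indicator I1 t + g t * indicator I2 t \<partial>lborel)"
    by (rule nn_integral_mono_AE)
  also have "\<dots> = (\<integral>\<^sup>+ t. g t * indicator I1 t \<partial>lborel) + (\<integral>\<^sup>+ t. g t * indicator I2 t \<partial>lborel)"
    using g by (intro nn_integral_add) (auto simp: I1_def I2_def)
  finally have split: "integral\<^sup>N lborel g
      \<le> (\<integral>\<^sup>+ t. g t * indicator I1 t \<partial>lborel) + (\<integral>\<^sup>+ t. g t * indicator I2 t \<partial>lborel)" .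
  have first: "(\<integral>\<^sup>+ t. g t * indicator I1 t \<partial>lborel) \<le> (\<integral>\<^sup>+ t \<in> {0..T1}. f1 t \<partial>lborel)"
  proof (rule nn_integral_mono)
    show "g t * indicator I1 t \<le> f1 t * indicator {0..T1} t" for t
      using order_trans[OF g_le_f f1, of t] by (cases "t \<in> I1") (auto simp: I1_def)
  qed
  have "(\<integral>\<^sup>+ t. g t * indicator I2 t \<partial>lborel)
      = (\<integral>\<^sup>+ s. g (T1 + s) * indicator I2 (T1 + s) \<partial>lborel)"
    using nn_integral_real_affine[of "\<lambda>t. g t * indicator I2 t" 1 T1] g by (simp add: I2_def)
  also have "\<dots> \<le> (\<integral>\<^sup>+ s \<in> {0..T2}. f2 s \<partial>lborel)"
  proof (rule nn_integral_mono)
    show "g (T1 + s) * indicator I2 (T1 + s) \<le> f2 s * indicator {0..T2} s" for s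
      using order_trans[OF g_le_f f2, of s] by (cases "T1 + s \<in> I2") (auto simp: I2_def)
  qed
  finally have second: "(\<integral>\<^sup>+ t. g t * indicator I2 t \<partial>lborel) \<le> (\<integral>\<^sup>+ s \<in> {0..T2}. f2 s \<partial>lborel)" .
  show "integral\<^sup>N lborel g
      \<le> (\<integral>\<^sup>+ t \<in> {0..T1}. f1 t \<partial>lborel) + (\<integral>\<^sup>+ s \<in> {0..T2}. f2 s \<partial>lborel)"
    using split add_mono[OF first second] by (rule order_trans)
qed

lemma action_glue_le:
  assumes "\<And>x. deriv U (x + n) = deriv U x"
  shows "action U (T1 + T2) (\<lambda>t. if t \<le> T1 then \<gamma>1 t else \<gamma>2 (t - T1) + n)
    \<le> action U T1 \<gamma>1 + action U T2 \<gamma>2"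
  unfolding action_def
proof (rule nn_integral_interval_glue_le)
  let ?\<gamma> = "\<lambda>t. if t \<le> T1 then \<gamma>1 t else \<gamma>2 (t - T1) + n"
  fix t assume t: "0 < t" "t < T1"
  have "vector_derivative ?\<gamma> (at t) = vector_derivative \<gamma>1 (at t)"
  proof (rule vector_derivative_cong_eq[where A = UNIV])
    show "\<forall>\<^sub>F x in nhds t. x \<in> UNIV \<longrightarrow> ?\<gamma> x = \<gamma>1 x"
      unfolding eventually_nhds using t by (intro exI[of _ "{..<T1}"]) auto
  qed auto
  then show "ennreal (lagr U (vector_derivative ?\<gamma> (at t)) (?\<gamma> t))
      \<le> ennreal (lagr U (vector_derivative \<gamma>1 (at t)) (\<gamma>1 t))"
    using t by simp
next
  let ?\<gamma> = "\<lambda>t. if t \<le> T1 then \<gamma>1 t else \<gamma>2 (t - T1) + n"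
  fix s assume s: "0 < s" "s < T2"
  have "vector_derivative ?\<gamma> (at (T1 + s)) = vector_derivative (\<lambda>t. \<gamma>2 (t - T1) + n) (at (T1 + s))"
  proof (rule vector_derivative_cong_eq[where A = UNIV])
    show "\<forall>\<^sub>F x in nhds (T1 + s). x \<in> UNIV \<longrightarrow> ?\<gamma> x = \<gamma>2 (x - T1) + n"
      unfolding eventually_nhds using s by (intro exI[of _ "{T1<..}"]) auto
  qed auto
  also have "\<dots> = vector_derivative \<gamma>2 (at s)"
    by (simp add: vector_derivative_shift)
  finally show "ennreal (lagr U (vector_derivative ?\<gamma> (at (T1 + s))) (?\<gamma> (T1 + s)))
      \<le> ennreal (lagr U (vector_derivative \<gamma>2 (at s)) (\<gamma>2 s))"
    using s by (simp add: lagr_def assms)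
qed

definition time_barrier :: "(real \<Rightarrow> real) \<Rightarrow> real \<Rightarrow> real \<Rightarrow> real \<Rightarrow> ennreal" where
  "time_barrier U T y z = (INF \<gamma> \<in> {\<gamma>. abs_cont_on 0 T \<gamma> \<and> \<gamma> 0 = z \<and> \<gamma> T - y \<in> \<int>}. action U T \<gamma>)"

lemma peierls_eq_Liminf_time_barrier: "peierls U y z = Liminf at_top (\<lambda>T. time_barrier U T y z)"
  by (simp add: peierls_def time_barrier_def)

lemma time_barrier_triangle:
  assumes "0 \<le> T1" "0 \<le> T2" and dper: "\<And>(m::int) x. deriv U (x + of_int m) = deriv U x"
  shows "time_barrier U (T1 + T2) x z \<le> time_barrier U T1 y z + time_barrier U T2 x y"
proof -
  have "time_barrier U (T1 + T2) x z \<le> action U T1 \<gamma>1 + action U T2 \<gamma>2"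
    if ac1: "abs_cont_on 0 T1 \<gamma>1" and "\<gamma>1 0 = z" "\<gamma>1 T1 - y \<in> \<int>"
      and ac2: "abs_cont_on 0 T2 \<gamma>2" and "\<gamma>2 0 = y" "\<gamma>2 T2 - x \<in> \<int>" for \<gamma>1 \<gamma>2
  proof -
    from \<open>\<gamma>1 T1 - y \<in> \<int>\<close> obtain m where m: "\<gamma>1 T1 - y = of_int m" by (elim Ints_cases)
    define \<gamma> where "\<gamma> = (\<lambda>t. if t \<le> T1 then \<gamma>1 t else \<gamma>2 (t - T1) + of_int m)"
    have "\<gamma> (T1 + T2) = \<gamma>2 T2 + of_int m"
      using m \<open>\<gamma>2 0 = y\<close> \<open>0 \<le> T2\<close> by (cases "T2 = 0") (auto simp: \<gamma>_def)
    then have "\<gamma> (T1 + T2) - x = (\<gamma>2 T2 - x) + of_int m" by simp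
    then have "\<gamma> (T1 + T2) - x \<in> \<int>" using \<open>\<gamma>2 T2 - x \<in> \<int>\<close> by (metis Ints_add Ints_of_int)
    moreover have "abs_cont_on 0 (T1 + T2) \<gamma>"
      unfolding \<gamma>_def using m \<open>\<gamma>2 0 = y\<close> assms(1,2) by (intro abs_cont_on_glue ac1 ac2) auto
    ultimately have "time_barrier U (T1 + T2) x z \<le> action U (T1 + T2) \<gamma>"
      unfolding time_barrier_def using \<open>\<gamma>1 0 = z\<close> assms(1) by (intro INF_lower) (simp add: \<gamma>_def)
    also have "\<dots> \<le> action U T1 \<gamma>1 + action U T2 \<gamma>2"
      unfolding \<gamma>_def by (rule action_glue_le) (rule dper)
    finally show ?thesis .
  qed
  then show ?thesis
    unfolding time_barrier_def[of U T1] time_barrier_def[of U T2] by (intro INF_add_INF_ge) auto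
qed

lemma peierls_triangle:
  assumes "\<And>(m::int) x. deriv U (x + of_int m) = deriv U x"
  shows "peierls U x z \<le> peierls U y z + peierls U x y"
  unfolding peierls_eq_Liminf_time_barrier
  by (rule Liminf_at_top_le_add) (rule time_barrier_triangle[OF _ _ assms])

lemma Wfun_triangle:
  assumes "k \<ge> 1" and "\<And>(m::int) x. deriv U (x + of_int m) = deriv U x"
  shows "Wfun U xm k x \<le> Wfun U xm k y + peierls U x y"
proof -
  have "Wfun U xm k y \<in> (\<lambda>j. Wmin U xm k j + peierls U y (xm j)) ` {1..int k}"
    unfolding Wfun_def using assms(1) by (intro Min_in) auto
  then obtain j where j: "j \<in> {1..int k}"
    and Wy: "Wfun U xm k y = Wmin U xm k j + peierls U y (xm j)"
    by auto
  have "Wfun U xm k x \<le> Wmin U xm k j + peierls U x (xm j)"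
    unfolding Wfun_def using j by (intro Min_le) auto
  also have "\<dots> \<le> Wmin U xm k j + (peierls U y (xm j) + peierls U x y)"
    by (intro add_left_mono peierls_triangle assms(2))
  also have "\<dots> = Wfun U xm k y + peierls U x y"
    by (simp add: Wy add.assoc)
  finally show ?thesis .
qed

theorem lemma4p4:
  fixes U Ut :: "real \<Rightarrow> real" and b :: real and k :: nat
    and xm xM :: "int \<Rightarrow> real"
  assumes smooth: "smooth_fun Ut"
    and per: "\<And>x. Ut (x + 1) = Ut x"
    and skew: "\<And>x. U x = Ut x - b * x"
    and k: "k \<ge> 1"
    and xM0: "xM 0 = 0" and xMk: "xM (int k) = 1"
    and xm_per: "\<And>i. xm (i + int k) = xm i + 1"
    and xM_per: "\<And>i. xM (i + int k) = xM i + 1"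
    and interleave: "\<And>i. xM (i - 1) < xm i \<and> xm i < xM i"
    and mins: "\<And>i. is_local_min U (xm i)"
    and maxs: "\<And>i. is_local_max U (xM i)"
    and crit: "\<And>y. deriv U y = 0 \<longleftrightarrow> y \<in> range xm \<or> y \<in> range xM"
  shows "Wfun U xm k x =
     Min ((\<lambda>i. min (Wmin U xm k i + peierls U x (xm i))
                    (Wfun U xm k (xM i) + peierls U x (xM i))) ` {1..int k})"
proof -
  have dper: "deriv U (y + of_int m) = deriv U y" for m :: int and y
    using per skew by (rule deriv_skew_periodic)
  have "Wfun U xm k x \<le> Wfun U xm k (xM i) + peierls U x (xM i)" for i
    using k dper by (rule Wfun_triangle)
  then show ?thesis
    unfolding Wfun_def[of U xm k x] using k by (intro Min_image_min_eq[symmetric]) auto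
qed

end
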